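(* Fix $k$ and $\alpha>0$, and let $\beta\in(0,1)$. If $k>8/(1-\beta)$ and $n$ is sufficiently large, then with high probability over the random $k$-CNF formula $\Phi=\Phi(k,n,\lfloor\alpha n\rfloor)$ with clause set $\mathcal C_\Phi$, every subset $\mathcal C'\subseteq\mathcal C_\Phi$ with $2\le|\mathcal C'|\le2\log n$ contains at least two different clauses $c_1,c_2\in\mathcal C'$ such that for each $i\in\{1,2\}$, $$\Big|\mathrm{vbl}(c_i)\setminus\bigcup_{c'\in\mathcal C'\setminus\{c_i\}}\mathrm{vbl}(c')\Big|\ge\beta k.$$
   Context: The random $k$-CNF formula $\Phi(k,n,m)$ has variables $V=\{v_1,\dots,v_n\}$ and $m$ clauses generated independently, each a disjunction of $k$ literals, each literal chosen uniformly at random with replacement from the $2n$ literals $\{v_1,\dots,v_n,\neg v_1,\dots,\neg v_n\}$. $\mathrm{vbl}(c)$ is the set of (distinct) variables appearing in clause $c$. $\log$ denotes $\log_2$. *)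

theory Defs
  imports "HOL-Probability.Probability"
begin

text \<open>A literal over variables v_0..v_(n-1) is a pair (i, s) with i < n; s = True means the
  positive literal v_i, s = False the negated literal. A k-CNF formula with m clauses is a
  function F with F c j = j-th literal of clause c, for c < m and j < k (extensional).\<close>

definition literals :: "nat \<Rightarrow> (nat \<times> bool) set" where
  "literals n = {..<n} \<times> UNIV"

definition kcnf_formulas :: "nat \<Rightarrow> nat \<Rightarrow> nat \<Rightarrow> (nat \<Rightarrow> nat \<Rightarrow> nat \<times> bool) set" where
  "kcnf_formulas k n m = {..<m} \<rightarrow>\<^sub>E ({..<k} \<rightarrow>\<^sub>E literals n)"

text \<open>Random formula Phi(k,n,m): every literal independently uniform over the 2n literals,
  i.e. the uniform distribution on all such formulas.\<close>
definition random_kcnf :: "nat \<Rightarrow> nat \<Rightarrow> nat \<Rightarrow> (nat \<Rightarrow> nat \<Rightarrow> nat \<times> bool) pmf" where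
  "random_kcnf k n m = pmf_of_set (kcnf_formulas k n m)"

definition vbl :: "nat \<Rightarrow> (nat \<Rightarrow> nat \<Rightarrow> nat \<times> bool) \<Rightarrow> nat \<Rightarrow> nat set" where
  "vbl k F c = fst ` (F c) ` {..<k}"

definition good_formula :: "nat \<Rightarrow> real \<Rightarrow> nat \<Rightarrow> nat \<Rightarrow> (nat \<Rightarrow> nat \<Rightarrow> nat \<times> bool) \<Rightarrow> bool" where
  "good_formula k \<beta> n m F \<longleftrightarrow>
     (\<forall>C'. C' \<subseteq> {..<m} \<and> 2 \<le> card C' \<and> real (card C') \<le> 2 * log 2 (real n) \<longrightarrow>
        (\<exists>c1\<in>C'. \<exists>c2\<in>C'. c1 \<noteq> c2 \<and>
           (\<forall>c\<in>{c1, c2}.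
              real (card (vbl k F c - (\<Union>c'\<in>C' - {c}. vbl k F c'))) \<ge> \<beta> * real k)))"

end

(*
  A clause set C' of size s violating the property has at most one clause with beta k or more
  unshared variables. Every variable of C' is either unshared or occurs in at least two clauses,
  so 2 |vbl(C')| <= (s + 1) k + (s - 1) beta k, i.e. |vbl(C')| <= s k - 4 (s - 1) =: D when
  (1 - beta) k >= 8. A union bound over s, over C' and over a D-set of variables containing
  vbl(C') bounds the failure probability by the sum over s of C(m,s) C(n,D) (D/n)^(s k). Since
  C(n,D) (D/n)^D <= e^D, each term is O(log^4 n / n^2), and there are O(log n) values of s.
*)

theory Submission
  imports Defs "HOL-Real_Asymp.Real_Asymp"
begin

definition unshared :: "('a \<Rightarrow> 'b set) \<Rightarrow> 'a set \<Rightarrow> 'a \<Rightarrow> 'b set" where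
  "unshared V C c = V c - (\<Union>c'\<in>C - {c}. V c')"

lemma double_card_UN_le:
  assumes C: "finite C" and V: "\<And>c. c \<in> C \<Longrightarrow> finite (V c)"
  shows "2 * card (\<Union>c\<in>C. V c) \<le> (\<Sum>c\<in>C. card (unshared V C c)) + (\<Sum>c\<in>C. card (V c))"
proof -
  define U where "U = (\<Union>c\<in>C. V c)"
  define U1 where "U1 = (\<Union>c\<in>C. unshared V C c)"
  define mult where "mult x = card {c\<in>C. x \<in> V c}" for x
  have U: "finite U" using C V by (simp add: U_def)
  have "(\<Sum>c\<in>C. card (V c)) = (\<Sum>c\<in>C. card {x\<in>U. x \<in> V c})"
    by (intro sum.cong refl arg_cong[where f=card]) (auto simp: U_def)
  also have "\<dots> = (\<Sum>x\<in>U. mult x)"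
    using C U by (intro sum_multicount_gen) (auto simp: mult_def)
  finally have sum_V: "(\<Sum>c\<in>C. card (V c)) = (\<Sum>x\<in>U. mult x)" .
  have sum_unshared: "(\<Sum>c\<in>C. card (unshared V C c)) = card U1"
    unfolding U1_def using C V
    by (intro card_UN_disjoint[symmetric]) (auto simp: unshared_def)
  have "2 \<le> of_bool (x \<in> U1) + mult x" if "x \<in> U" for x
    \<comment> \<open>an element of a single set is unshared, any other one is counted twice\<close>
  proof (cases "mult x \<le> 1")
    case True
    have "{c\<in>C. x \<in> V c} \<noteq> {}" using \<open>x \<in> U\<close> by (auto simp: U_def)
    with True C obtain c where "{c\<in>C. x \<in> V c} = {c}"
      by (auto simp: mult_def card_le_Suc0_iff_eq)
    then have "x \<in> U1" by (auto simp: U1_def unshared_def)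
    with True show ?thesis using \<open>{c\<in>C. x \<in> V c} = {c}\<close> by (simp add: mult_def)
  qed simp
  then have "(\<Sum>x\<in>U. 2) \<le> (\<Sum>x\<in>U. of_bool (x \<in> U1) + mult x)"
    by (rule sum_mono)
  then have "2 * card U \<le> (\<Sum>x\<in>U. of_bool (x \<in> U1) + mult x)"
    by simp
  also have "\<dots> = card U1 + (\<Sum>x\<in>U. mult x)"
  proof -
    have "U1 \<subseteq> U" by (auto simp: U1_def U_def unshared_def)
    then show ?thesis using U by (simp add: sum.distrib Int_absorb1)
  qed
  finally show ?thesis unfolding sum_V sum_unshared U_def .
qed

lemma card_UN_le_if_at_most_one_large_unshared:
  fixes b :: real
  assumes C: "finite C" "C \<noteq> {}"
    and V: "\<And>c. c \<in> C \<Longrightarrow> finite (V c)" "\<And>c. c \<in> C \<Longrightarrow> card (V c) \<le> k"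
    and one_large: "\<And>c1 c2. c1 \<in> C \<Longrightarrow> c2 \<in> C \<Longrightarrow> c1 \<noteq> c2 \<Longrightarrow>
      card (unshared V C c1) < b \<or> card (unshared V C c2) < b"
  shows "2 * card (\<Union>c\<in>C. V c) \<le> (card C + 1) * real k + (real (card C) - 1) * b"
proof -
  obtain c0 where c0: "c0 \<in> C" "\<And>c. c \<in> C - {c0} \<Longrightarrow> card (unshared V C c) < b"
    using one_large C(2) by (metis DiffE ex_in_conv not_less singletonI)
  have "card (unshared V C c0) \<le> k"
    using V c0(1) card_mono[of "V c0" "unshared V C c0"] by (force simp: unshared_def)
  have "(\<Sum>c\<in>C. real (card (unshared V C c)))
      = card (unshared V C c0) + (\<Sum>c\<in>C - {c0}. real (card (unshared V C c)))"
    using C c0 by (simp add: sum.remove)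
  also have "\<dots> \<le> k + (\<Sum>c\<in>C - {c0}. b)"
    using \<open>card (unshared V C c0) \<le> k\<close> c0(2) by (intro add_mono sum_mono) (auto intro: less_imp_le)
  also have "\<dots> = k + (real (card C) - 1) * b"
    using C c0 by (simp add: of_nat_diff Suc_le_eq card_gt_0_iff)
  finally have "(\<Sum>c\<in>C. real (card (unshared V C c))) \<le> k + (real (card C) - 1) * b" .
  moreover have "(\<Sum>c\<in>C. real (card (V c))) \<le> card C * real k"
    using sum_mono[of C "\<lambda>c. real (card (V c))" "\<lambda>_. real k"] V by simp
  moreover have "2 * card (\<Union>c\<in>C. V c) \<le> (\<Sum>c\<in>C. real (card (unshared V C c))) + (\<Sum>c\<in>C. real (card (V c)))"
    using of_nat_mono[OF double_card_UN_le[of C V]] C(1) V(1) by simp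
  ultimately show ?thesis by (simp add: algebra_simps)
qed

lemma pow_div_fact_le_exp:
  fixes x :: real
  assumes "0 \<le> x"
  shows "x ^ d / fact d \<le> exp x"
proof -
  have "(\<lambda>i. x ^ i /\<^sub>R fact i) sums exp x" by (rule exp_converges)
  moreover have "sum (\<lambda>i. x ^ i /\<^sub>R fact i) {d} \<le> suminf (\<lambda>i. x ^ i /\<^sub>R fact i)"
    using calculation assms by (intro sum_le_suminf) (auto simp: sums_iff)
  ultimately show ?thesis by (simp add: sums_iff divide_inverse mult.commute)
qed

lemma binomial_mul_pow_le_exp: "real (n choose d) * (real d / real n) ^ d \<le> exp (real d)"
proof (cases "n = 0")
  case False
  have "real (n choose d) * fact d \<le> real n ^ d"
    using binomial_fact_pow[of n d] by (metis of_nat_fact of_nat_le_iff of_nat_mult of_nat_power)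
  then have "real (n choose d) * (real d / real n) ^ d \<le> real n ^ d / fact d * (real d / real n) ^ d"
    by (intro mult_right_mono) (simp_all add: field_simps)
  also have "\<dots> = real d ^ d / fact d"
    using False by (simp add: power_divide)
  also have "\<dots> \<le> exp (real d)"
    by (rule pow_div_fact_le_exp) simp
  finally show ?thesis .
next
  case True
  then show ?thesis by (cases d) simp_all
qed

lemma finite_vbl [simp]: "finite (vbl k F c)"
  by (simp add: vbl_def)

lemma card_vbl_le: "card (vbl k F c) \<le> k"
  unfolding vbl_def image_image by (rule card_image_le[THEN order_trans]) simp_all

lemma card_vbl_UN_le:
  fixes \<beta> :: real
  assumes C: "finite C" "C \<noteq> {}" and \<beta>: "0 \<le> \<beta>" "8 \<le> real k * (1 - \<beta>)"
    and one_large: "\<And>c1 c2. c1 \<in> C \<Longrightarrow> c2 \<in> C \<Longrightarrow> c1 \<noteq> c2 \<Longrightarrow>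
      card (unshared (vbl k F) C c1) < \<beta> * k \<or> card (unshared (vbl k F) C c2) < \<beta> * k"
  shows "card (\<Union>c\<in>C. vbl k F c) \<le> card C * k - 4 * (card C - 1)"
proof -
  have "2 * card (\<Union>c\<in>C. vbl k F c) \<le> (card C + 1) * real k + (real (card C) - 1) * (\<beta> * k)"
    using C one_large card_vbl_le by (intro card_UN_le_if_at_most_one_large_unshared) auto
  also have "\<dots> = 2 * (card C * real k) - (real (card C) - 1) * (real k * (1 - \<beta>))"
    by (simp add: algebra_simps)
  also have "\<dots> \<le> 2 * (card C * real k) - (real (card C) - 1) * 8"
    using C \<beta> by (intro diff_left_mono mult_left_mono) (auto simp: Suc_le_eq card_gt_0_iff)
  finally have "card (\<Union>c\<in>C. vbl k F c) \<le> real (card C * k) - 4 * (real (card C) - 1)"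
    by simp
  moreover have "4 * (card C - 1) \<le> card C * k"
  proof -
    have "8 \<le> real k" using \<beta> mult_left_le[of "1 - \<beta>" "real k"] by linarith
    then show ?thesis using mult_le_mono[of 4 k "card C - 1" "card C"] by (simp add: mult.commute)
  qed
  moreover have "1 \<le> card C" using C by (simp add: Suc_le_eq card_gt_0_iff)
  ultimately have "card (\<Union>c\<in>C. vbl k F c) \<le> real (card C * k - 4 * (card C - 1))"
    by simp
  then show ?thesis by (simp only: of_nat_le_iff)
qed

lemma finite_kcnf_formulas: "finite (kcnf_formulas k n m)"
  by (simp add: kcnf_formulas_def literals_def finite_PiE)

lemma set_pmf_random_kcnf:
  assumes "0 < n"
  shows "set_pmf (random_kcnf k n m) = kcnf_formulas k n m"
proof -
  have "kcnf_formulas k n m \<noteq> {}"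
    using assms by (simp add: kcnf_formulas_def literals_def PiE_eq_empty_iff lessThan_empty_iff)
  then show ?thesis by (simp add: random_kcnf_def finite_kcnf_formulas)
qed

lemma kcnf_formulas_Int_vbl_subset:
  assumes "C \<subseteq> {..<m}" "T \<subseteq> {..<n}"
  shows "kcnf_formulas k n m \<inter> {F. \<forall>c\<in>C. vbl k F c \<subseteq> T} =
    (\<Pi>\<^sub>E c\<in>{..<m}. {..<k} \<rightarrow>\<^sub>E (if c \<in> C then T \<times> UNIV else literals n))"
  using assms unfolding kcnf_formulas_def vbl_def literals_def
  by (auto simp: PiE_iff image_subset_iff split: if_splits) (auto dest!: bspec)

lemma prob_vbl_subset:
  assumes C: "C \<subseteq> {..<m}" and T: "T \<subseteq> {..<n}" and n: "0 < n"
  shows "measure_pmf.prob (random_kcnf k n m) {F. \<forall>c\<in>C. vbl k F c \<subseteq> T}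
    = (card T / n) ^ (k * card C)"
proof -
  define A where "A c = (if c \<in> C then T \<times> (UNIV :: bool set) else literals n)" for c
  have card_A: "card (A c) = (if c \<in> C then 2 * card T else 2 * n)" for c
    by (simp add: A_def literals_def card_cartesian_product)
  have "kcnf_formulas k n m \<noteq> {}"
    using n set_pmf_random_kcnf[of n k m] set_pmf_not_empty by metis
  then have "measure_pmf.prob (random_kcnf k n m) {F. \<forall>c\<in>C. vbl k F c \<subseteq> T}
      = card (\<Pi>\<^sub>E c\<in>{..<m}. {..<k} \<rightarrow>\<^sub>E A c) / card (kcnf_formulas k n m)"
    unfolding random_kcnf_def
    by (simp add: measure_pmf_of_set finite_kcnf_formulas kcnf_formulas_Int_vbl_subset[OF C T] A_def)
  also have "\<dots> = (\<Prod>c<m. real (card (A c)) ^ k) / (\<Prod>c<m. (2 * real n) ^ k)"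
    by (simp add: card_PiE kcnf_formulas_def literals_def card_cartesian_product mult.commute)
  also have "\<dots> = (\<Prod>c<m. if c \<in> C then (card T / n) ^ k else 1)"
    unfolding prod_dividef[symmetric] using n by (intro prod.cong) (simp_all add: card_A power_divide)
  also have "\<dots> = (card T / n) ^ (k * card C)"
    using C by (simp add: prod.If_cases Int_absorb1 power_mult)
  finally show ?thesis .
qed

lemma not_good_formula_imp_vbl_cover:
  fixes \<beta> :: real
  assumes F: "F \<in> kcnf_formulas k n m" and bad: "\<not> good_formula k \<beta> n m F"
    and \<beta>: "0 \<le> \<beta>" "8 \<le> real k * (1 - \<beta>)" and kn: "real k * (2 * log 2 n) \<le> n"
  obtains C T where "C \<subseteq> {..<m}" "2 \<le> card C" "card C \<le> 2 * log 2 n"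
    "T \<subseteq> {..<n}" "card T = card C * k - 4 * (card C - 1)" "\<forall>c\<in>C. vbl k F c \<subseteq> T"
proof -
  obtain C where C: "C \<subseteq> {..<m}" "2 \<le> card C" "card C \<le> 2 * log 2 n"
    and one_large: "\<And>c1 c2. c1 \<in> C \<Longrightarrow> c2 \<in> C \<Longrightarrow> c1 \<noteq> c2 \<Longrightarrow>
      card (unshared (vbl k F) C c1) < \<beta> * k \<or> card (unshared (vbl k F) C c2) < \<beta> * k"
    using bad unfolding good_formula_def unshared_def by (auto simp: not_le)
  define U where "U = (\<Union>c\<in>C. vbl k F c)"
  have "finite C" "C \<noteq> {}" using C finite_subset by fastforce+
  then have "card U \<le> card C * k - 4 * (card C - 1)"
    unfolding U_def using \<beta> one_large by (rule card_vbl_UN_le)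
  moreover have "U \<subseteq> {..<n}"
    using F C(1) by (force simp: U_def vbl_def kcnf_formulas_def literals_def PiE_iff)
  moreover have "card C * k - 4 * (card C - 1) \<le> n"
  proof -
    have "real (card C * k) \<le> real k * (2 * log 2 n)"
      using C(3) by (simp add: mult.commute mult_left_mono)
    with kn show ?thesis by linarith
  qed
  ultimately obtain T where T: "U \<subseteq> T" "T \<subseteq> {..<n}" "card T = card C * k - 4 * (card C - 1)"
    using exists_subset_between[of U "card C * k - 4 * (card C - 1)" "{..<n}"] by auto
  then show ?thesis using that[OF C T(2,3)] by (auto simp: U_def)
qed

lemma prob_not_good_formula_le_sum:
  fixes \<beta> :: real
  assumes n: "0 < n" and \<beta>: "0 \<le> \<beta>" "8 \<le> real k * (1 - \<beta>)" and kn: "real k * (2 * log 2 n) \<le> n"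
  shows "measure_pmf.prob (random_kcnf k n m) {F. \<not> good_formula k \<beta> n m F}
    \<le> (\<Sum>s\<in>{2..nat \<lfloor>2 * log 2 n\<rfloor>}. real (m choose s) * real (n choose (s * k - 4 * (s - 1)))
          * (real (s * k - 4 * (s - 1)) / n) ^ (k * s))"
    (is "_ \<le> (\<Sum>s\<in>?S. _)")
proof -
  let ?M = "measure_pmf (random_kcnf k n m)"
  define D where "D s = s * k - 4 * (s - 1)" for s
  define Cs where "Cs s = {C. C \<subseteq> {..<m} \<and> card C = s}" for s
  define Ts where "Ts s = {T. T \<subseteq> {..<n} \<and> card T = D s}" for s
  define E where "E C T = {F. \<forall>c\<in>C. vbl k F c \<subseteq> T}" for C T
  have fin: "finite (Cs s)" "finite (Ts s)" for s
    unfolding Cs_def Ts_def by (auto intro: finite_subset[of _ "Pow _"])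
  have cover: "{F. \<not> good_formula k \<beta> n m F} \<inter> set_pmf (random_kcnf k n m)
      \<subseteq> (\<Union>s\<in>?S. \<Union>C\<in>Cs s. \<Union>T\<in>Ts s. E C T)"
  proof
    fix F assume "F \<in> {F. \<not> good_formula k \<beta> n m F} \<inter> set_pmf (random_kcnf k n m)"
    then have "F \<in> kcnf_formulas k n m" "\<not> good_formula k \<beta> n m F"
      using n by (auto simp: set_pmf_random_kcnf)
    then obtain C T where "C \<subseteq> {..<m}" "2 \<le> card C" "card C \<le> 2 * log 2 n"
      "T \<subseteq> {..<n}" "card T = card C * k - 4 * (card C - 1)" "\<forall>c\<in>C. vbl k F c \<subseteq> T"
      by (rule not_good_formula_imp_vbl_cover[OF _ _ \<beta> kn])
    then have "card C \<in> ?S" "C \<in> Cs (card C)" "T \<in> Ts (card C)" "F \<in> E C T"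
      by (simp_all add: le_nat_floor Cs_def Ts_def D_def E_def)
    then show "F \<in> (\<Union>s\<in>?S. \<Union>C\<in>Cs s. \<Union>T\<in>Ts s. E C T)"
      by blast
  qed
  have "measure ?M {F. \<not> good_formula k \<beta> n m F}
      = measure ?M ({F. \<not> good_formula k \<beta> n m F} \<inter> set_pmf (random_kcnf k n m))"
    by (simp add: measure_Int_set_pmf)
  also have "\<dots> \<le> measure ?M (\<Union>s\<in>?S. \<Union>C\<in>Cs s. \<Union>T\<in>Ts s. E C T)"
    using cover by (rule measure_pmf.finite_measure_mono) simp
  also have "\<dots> \<le> (\<Sum>s\<in>?S. measure ?M (\<Union>C\<in>Cs s. \<Union>T\<in>Ts s. E C T))"
    by (intro measure_pmf.finite_measure_subadditive_finite) auto
  also have "\<dots> \<le> (\<Sum>s\<in>?S. \<Sum>C\<in>Cs s. measure ?M (\<Union>T\<in>Ts s. E C T))"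
    by (intro sum_mono measure_pmf.finite_measure_subadditive_finite fin) auto
  also have "\<dots> \<le> (\<Sum>s\<in>?S. \<Sum>C\<in>Cs s. \<Sum>T\<in>Ts s. measure ?M (E C T))"
    by (intro sum_mono measure_pmf.finite_measure_subadditive_finite fin) auto
  also have "\<dots> = (\<Sum>s\<in>?S. \<Sum>C\<in>Cs s. \<Sum>T\<in>Ts s. (real (D s) / n) ^ (k * s))"
    unfolding E_def Cs_def Ts_def using n by (intro sum.cong refl) (simp add: prob_vbl_subset)
  also have "\<dots> = (\<Sum>s\<in>?S. real (m choose s) * real (n choose D s) * (real (D s) / n) ^ (k * s))"
    by (simp add: Cs_def Ts_def n_subsets mult.assoc)
  finally show ?thesis unfolding D_def .
qed

lemma union_bound_term_le:
  fixes \<alpha> L :: real and m n s k :: nat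
  assumes \<alpha>: "0 < \<alpha>" and n: "0 < n" and s: "2 \<le> s" "real s \<le> L" and k: "4 \<le> k"
    and m: "real m \<le> \<alpha> * n" and small: "\<alpha> * exp k * real k ^ 4 * (L ^ 4 / real n ^ 3) \<le> 1"
  shows "real (m choose s) * real (n choose (s * k - 4 * (s - 1)))
      * (real (s * k - 4 * (s - 1)) / n) ^ (k * s) \<le> \<alpha>\<^sup>2 * exp k ^ 2 * (k * L) ^ 4 / real n ^ 2"
proof -
  define D where "D = s * k - 4 * (s - 1)"
  \<comment> \<open>the term is at most \<open>y ^ s / x ^ 4\<close>, and \<open>y \<le> 1\<close>\<close>
  define x where "x = k * L / n"
  define y where "y = \<alpha> * n * exp k * x ^ 4"
  have x: "0 < x" using s k n by (simp add: x_def)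
  have "y = \<alpha> * exp k * real k ^ 4 * (L ^ 4 / real n ^ 3)"
    using n by (simp add: y_def x_def field_simps power_mult_distrib eval_nat_numeral)
  then have y: "0 \<le> y" "y \<le> 1" using \<alpha> small by simp_all
  have D: "D + 4 * (s - 1) = k * s"
    using k mult_le_mono[of 4 k "s - 1" s] by (simp add: D_def mult.commute)
  have "real (n choose D) * (real D / n) ^ (k * s)
      = (real (n choose D) * (real D / n) ^ D) * (real D / n) ^ (4 * (s - 1))"
    by (simp add: power_add flip: D)
  also have "\<dots> \<le> exp (k * s) * x ^ (4 * (s - 1))"
  proof (intro mult_mono)
    have "real D \<le> k * s" using D by (simp flip: of_nat_mult)
    then show "real (n choose D) * (real D / n) ^ D \<le> exp (k * s)"
      using binomial_mul_pow_le_exp[of n D] by (meson exp_le_cancel_iff order_trans)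
    have "real D \<le> k * L"
      using \<open>real D \<le> k * s\<close> mult_left_mono[OF s(2), of k] by simp
    then show "(real D / n) ^ (4 * (s - 1)) \<le> x ^ (4 * (s - 1))"
      unfolding x_def by (intro power_mono divide_right_mono) simp_all
  qed simp_all
  finally have binom: "real (n choose D) * (real D / n) ^ (k * s) \<le> exp (k * s) * x ^ (4 * (s - 1))" .
  have "real (m choose s) \<le> real m ^ s"
    by (cases "s \<le> m") (simp_all add: binomial_le_pow binomial_eq_0 flip: of_nat_power)
  also have "\<dots> \<le> (\<alpha> * n) ^ s"
    using m by (intro power_mono) simp_all
  finally have "real (m choose s) * (real (n choose D) * (real D / n) ^ (k * s))
      \<le> (\<alpha> * n) ^ s * (exp (k * s) * x ^ (4 * (s - 1)))"
    using binom \<alpha> by (intro mult_mono[OF _ binom]) simp_all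
  also have "\<dots> = y ^ s / x ^ 4"
  proof -
    have "4 * (s - 1) + 4 = 4 * s" using s(1) by simp
    then have "x ^ (4 * (s - 1)) = (x ^ 4) ^ s / x ^ 4"
      using x by (simp add: field_simps flip: power_add power_mult)
    moreover have "exp (real (k * s)) = exp k ^ s"
      by (simp add: mult.commute flip: exp_of_nat_mult)
    ultimately show ?thesis
      by (simp add: y_def power_mult_distrib)
  qed
  also have "\<dots> \<le> y ^ 2 / x ^ 4"
    using y s(1) x by (intro divide_right_mono power_decreasing) simp_all
  also have "\<dots> = (\<alpha> * n * exp k) ^ 2 * x ^ 4"
    using x by (simp add: y_def field_simps power2_eq_square)
  also have "\<dots> = \<alpha>\<^sup>2 * exp k ^ 2 * (k * L) ^ 4 / real n ^ 2"
    using n by (simp add: x_def field_simps eval_nat_numeral)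
  finally show ?thesis by (simp add: D_def mult.assoc)
qed

lemma prob_not_good_formula_le:
  fixes \<alpha> \<beta> :: real
  assumes \<alpha>: "0 < \<alpha>" and \<beta>: "0 \<le> \<beta>" "8 \<le> real k * (1 - \<beta>)"
    and n: "2 \<le> n" and m: "real m \<le> \<alpha> * n" and kn: "real k * (2 * log 2 n) \<le> n"
    and small: "\<alpha> * exp k * real k ^ 4 * ((2 * log 2 n) ^ 4 / real n ^ 3) \<le> 1"
  shows "measure_pmf.prob (random_kcnf k n m) {F. \<not> good_formula k \<beta> n m F}
    \<le> \<alpha>\<^sup>2 * exp k ^ 2 * real k ^ 4 * (2 * log 2 n) ^ 5 / real n ^ 2"
proof -
  define L where "L = 2 * log 2 (real n)"
  define S where "S = {2..nat \<lfloor>L\<rfloor>}"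
  have "4 \<le> k" using \<beta> mult_left_le[of "1 - \<beta>" "real k"] by linarith
  have "2 \<le> L" using n by (simp add: L_def)
  then have floor_L: "real (nat \<lfloor>L\<rfloor>) \<le> L" by simp
  then have S: "2 \<le> s \<and> real s \<le> L" if "s \<in> S" for s
    using that by (auto simp: S_def)
  have "card S \<le> L"
    using floor_L by (simp add: S_def)
  have "measure_pmf.prob (random_kcnf k n m) {F. \<not> good_formula k \<beta> n m F}
      \<le> (\<Sum>s\<in>S. real (m choose s) * real (n choose (s * k - 4 * (s - 1)))
          * (real (s * k - 4 * (s - 1)) / n) ^ (k * s))"
    unfolding S_def L_def using n \<beta> kn by (intro prob_not_good_formula_le_sum) simp_all
  also have "\<dots> \<le> (\<Sum>s\<in>S. \<alpha>\<^sup>2 * exp k ^ 2 * (k * L) ^ 4 / real n ^ 2)"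
    using \<alpha> n S \<open>4 \<le> k\<close> m small
    by (intro sum_mono union_bound_term_le) (simp_all add: L_def)
  also have "\<dots> = card S * (\<alpha>\<^sup>2 * exp k ^ 2 * (k * L) ^ 4 / real n ^ 2)"
    by simp
  also have "\<dots> \<le> L * (\<alpha>\<^sup>2 * exp k ^ 2 * (k * L) ^ 4 / real n ^ 2)"
    using \<open>card S \<le> L\<close> by (rule mult_right_mono) simp
  also have "\<dots> = \<alpha>\<^sup>2 * exp k ^ 2 * real k ^ 4 * (2 * log 2 n) ^ 5 / real n ^ 2"
    by (simp add: L_def power_mult_distrib eval_nat_numeral)
  finally show ?thesis .
qed

lemma prob_not_good_formula_tendsto_zero:
  fixes \<alpha> \<beta> :: real and m :: "nat \<Rightarrow> nat"
  assumes \<alpha>: "0 < \<alpha>" and \<beta>: "0 \<le> \<beta>" "8 \<le> real k * (1 - \<beta>)" and m: "\<And>n. real (m n) \<le> \<alpha> * n"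
  shows "(\<lambda>n. measure_pmf.prob (random_kcnf k n (m n)) {F. \<not> good_formula k \<beta> n (m n) F})
    \<longlonglongrightarrow> 0"
proof -
  define bound where "bound n = \<alpha>\<^sup>2 * exp k ^ 2 * real k ^ 4 * (2 * log 2 n) ^ 5 / real n ^ 2"
    for n :: nat
  have lim: "(\<lambda>n. k * (2 * log 2 n) / n) \<longlonglongrightarrow> 0"
    "(\<lambda>n. \<alpha> * exp k * real k ^ 4 * ((2 * log 2 n) ^ 4 / real n ^ 3)) \<longlonglongrightarrow> 0"
    "bound \<longlonglongrightarrow> 0"
    unfolding bound_def by real_asymp+
  have "eventually (\<lambda>n. measure_pmf.prob (random_kcnf k n (m n)) {F. \<not> good_formula k \<beta> n (m n) F}
      \<le> bound n) sequentially"
    using eventually_ge_at_top[of "2 :: nat"]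
      order_tendstoD(2)[OF lim(1) zero_less_one] order_tendstoD(2)[OF lim(2) zero_less_one]
  proof eventually_elim
    case (elim n)
    then show ?case
      unfolding bound_def using \<alpha> \<beta> m
      by (intro prob_not_good_formula_le) (simp_all add: field_simps)
  qed
  then show ?thesis
    by (intro tendsto_sandwich[OF _ _ tendsto_const lim(3)]) simp_all
qed

theorem lemma4p14:
  fixes k :: nat and \<alpha> \<beta> :: real
  assumes "\<alpha> > 0" and "0 < \<beta>" and "\<beta> < 1" and "real k > 8 / (1 - \<beta>)"
  shows "(\<lambda>n. measure_pmf.prob (random_kcnf k n (nat \<lfloor>\<alpha> * real n\<rfloor>))
              {F. good_formula k \<beta> n (nat \<lfloor>\<alpha> * real n\<rfloor>) F}) \<longlonglongrightarrow> 1"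
proof -
  let ?P = "\<lambda>n. measure_pmf.prob (random_kcnf k n (nat \<lfloor>\<alpha> * real n\<rfloor>))"
  let ?bad = "\<lambda>n. {F. \<not> good_formula k \<beta> n (nat \<lfloor>\<alpha> * real n\<rfloor>) F}"
  have \<beta>: "0 \<le> \<beta>" "8 \<le> real k * (1 - \<beta>)"
    using assms by (simp_all add: divide_less_eq)
  have "real (nat \<lfloor>\<alpha> * real n\<rfloor>) \<le> \<alpha> * n" for n
    using assms(1) by simp
  then have "(\<lambda>n. ?P n (?bad n)) \<longlonglongrightarrow> 0"
    by (rule prob_not_good_formula_tendsto_zero[OF assms(1) \<beta>])
  then have "(\<lambda>n. 1 - ?P n (?bad n)) \<longlonglongrightarrow> 1 - 0"
    by (intro tendsto_intros)
  moreover have "?P n {F. good_formula k \<beta> n (nat \<lfloor>\<alpha> * real n\<rfloor>) F} = 1 - ?P n (?bad n)" for n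
    using measure_pmf.prob_compl[of "?bad n"]
    by (simp add: Compl_eq_Diff_UNIV[symmetric] Collect_neg_eq[symmetric])
  ultimately show ?thesis
    by simp
qed

end
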